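(* Let $P\subseteq\mathbb{R}^m$ and $Q\subseteq\mathbb{R}^n$, let $\ell\le m$ and $\ell'\le n$ be positive integers with $m-\ell=n-\ell'$, and let $I=\{1,\dots,\ell\}$ and $I'=\{1,\dots,\ell'\}$. Let $g:\mathbb{R}^\ell\to\mathbb{R}^{\ell'}$ be an integral affine transformation, and define $f:\mathbb{R}^m\to\mathbb{R}^n$ by $f(x)=(g(x^1),x^2)$ where $x=(x^1,x^2)$ with $x^1\in\mathbb{R}^\ell$, $x^2\in\mathbb{R}^{m-\ell}$. If $f(P)\subseteq Q$, then for every integer $k\ge 1$, \[f\big(\mathrm{SC}^k(P,I)\big)\subseteq \mathrm{SC}^k(Q,I').\]
   Context: An integral affine transformation $g:\mathbb{R}^\ell\to\mathbb{R}^{\ell'}$ is a map $g(x)=Vx+v$ with $V$ an integral $\ell'\times\ell$ matrix and $v\in\mathbb{Z}^{\ell'}$. For $(\pi,\pi_0)\in\mathbb{Z}^n\times\mathbb{Z}$, the split set is $S(\pi,\pi_0)=\{x\in\mathbb{R}^n:\pi_0<\pi^Tx<\pi_0+1\}$. For $J\subseteq\{1,\dots,n\}$, $\mathcal{S}_n(J)$ is the family of split sets $S(\pi,\pi_0)$ with $\pi\in\mathbb{Z}^n$, $\pi_j=0$ for $j\notin J$, $\pi_0\in\mathbb{Z}$. For $X\subseteq\mathbb{R}^n$, $\mathrm{SC}(X,J)=\bigcap_{S\in\mathcal{S}_n(J)}\mathrm{conv}(X\setminus S)$, $\mathrm{SC}^1(X,J)=\mathrm{SC}(X,J)$ and $\mathrm{SC}^k(X,J)=\mathrm{SC}(\mathrm{SC}^{k-1}(X,J),J)$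 for $k\ge2$. *)

theory Defs
  imports "HOL-Analysis.Analysis"
begin

text \<open>Model of R^n: functions nat => real vanishing at all indices >= n
  (coordinates are 0-based, so coordinate j of the paper is index j-1).\<close>

definition Rn :: "nat \<Rightarrow> (nat \<Rightarrow> real) set" where
  "Rn n = {x. \<forall>i\<ge>n. x i = 0}"

definition convex_fun :: "(nat \<Rightarrow> real) set \<Rightarrow> bool" where
  "convex_fun X \<longleftrightarrow> (\<forall>x\<in>X. \<forall>y\<in>X. \<forall>u::real. 0 \<le> u \<and> u \<le> 1 \<longrightarrow>
      (\<lambda>i. u * x i + (1 - u) * y i) \<in> X)"

definition conv :: "(nat \<Rightarrow> real) set \<Rightarrow> (nat \<Rightarrow> real) set" where
  "conv X = convex_fun hull X"

definition split_set :: "nat \<Rightarrow> (nat \<Rightarrow> int) \<Rightarrow> int \<Rightarrow> (nat \<Rightarrow> real) set" where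
  "split_set n p p0 = {x. x \<in> Rn n \<and> real_of_int p0 < (\<Sum>i<n. real_of_int (p i) * x i)
                          \<and> (\<Sum>i<n. real_of_int (p i) * x i) < real_of_int p0 + 1}"

definition splits :: "nat \<Rightarrow> nat set \<Rightarrow> (nat \<Rightarrow> real) set set" where
  "splits n J = {split_set n p p0 | p p0. \<forall>j. j \<notin> J \<longrightarrow> p j = 0}"

definition SC :: "nat \<Rightarrow> nat set \<Rightarrow> (nat \<Rightarrow> real) set \<Rightarrow> (nat \<Rightarrow> real) set" where
  "SC n J X = (\<Inter>S\<in>splits n J. conv (X - S))"

definition SC_iter :: "nat \<Rightarrow> nat \<Rightarrow> nat set \<Rightarrow> (nat \<Rightarrow> real) set \<Rightarrow> (nat \<Rightarrow> real) set" where
  "SC_iter k n J X = (SC n J ^^ k) X"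

text \<open>f(x) = (g(x^1), x^2) with g(y) = V y + v, V integral l' x l, v integral.\<close>

definition lift_map ::
  "nat \<Rightarrow> nat \<Rightarrow> nat \<Rightarrow> (nat \<Rightarrow> nat \<Rightarrow> int) \<Rightarrow> (nat \<Rightarrow> int) \<Rightarrow> (nat \<Rightarrow> real) \<Rightarrow> (nat \<Rightarrow> real)" where
  "lift_map l l' n V v x = (\<lambda>i.
     if i < l' then (\<Sum>j<l. real_of_int (V i j) * x j) + real_of_int (v i)
     else if i < n then x (i - l' + l) else 0)"

end

theory Submission
  imports Defs
begin

text \<open>A map that commutes with convex combinations sends convex hulls into convex hulls. If
  moreover every split set of the target is pulled back into some split set of the source,
  then each point of \<open>X - S\<close> is mapped into \<open>Y - S'\<close>, so the image of the split closure of
  \<open>X\<close> lies in the split closure of \<open>Y\<close>. The map \<open>x \<mapsto> (g(x\<^sup>1), x\<^sup>2)\<close> has both properties: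
  since \<open>g\<close> is integral affine, \<open>\<pi>\<^sup>T f(x)\<close> equals \<open>(V\<^sup>T\<pi>)\<^sup>T x\<^sup>1 + \<pi>\<^sup>T v\<close> with integral data.\<close>

lemma convex_fun_conv: "convex_fun (conv A)"
  unfolding conv_def by (rule hull_in) (auto simp: convex_fun_def)

lemma conv_subset: "A \<subseteq> conv A"
  unfolding conv_def by (rule hull_subset)

lemma conv_minimal: "A \<subseteq> B \<Longrightarrow> convex_fun B \<Longrightarrow> conv A \<subseteq> B"
  unfolding conv_def by (rule hull_minimal)

lemma convex_fun_Rn: "convex_fun (Rn m)"
  by (auto simp: convex_fun_def Rn_def)

lemma conv_image_subset:
  assumes comb: "\<And>x y u. f (\<lambda>i. u * x i + (1 - u) * y i) = (\<lambda>i. u * f x i + (1 - u) * f y i)"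
    and "f ` A \<subseteq> B"
  shows "f ` conv A \<subseteq> conv B"
proof -
  have "conv A \<subseteq> f -` conv B"
  proof (rule conv_minimal)
    show "A \<subseteq> f -` conv B" using assms(2) conv_subset[of B] by auto
    show "convex_fun (f -` conv B)"
      using convex_fun_conv[of B] unfolding convex_fun_def by (auto simp: comb)
  qed
  then show ?thesis by auto
qed

lemma SC_subset_Rn:
  assumes "X \<subseteq> Rn m"
  shows "SC m J X \<subseteq> Rn m"
proof -
  have "split_set m (\<lambda>_. 0) 0 \<in> splits m J" by (auto simp: splits_def)
  moreover have "conv (X - S) \<subseteq> Rn m" for S
    using assms by (intro conv_minimal convex_fun_Rn) auto
  ultimately show ?thesis unfolding SC_def by blast
qed

lemma SC_image_subset:
  assumes comb: "\<And>x y u. f (\<lambda>i. u * x i + (1 - u) * y i) = (\<lambda>i. u * f x i + (1 - u) * f y i)"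
    and pullback: "\<And>S'. S' \<in> splits n J' \<Longrightarrow> \<exists>S\<in>splits m J. X \<inter> f -` S' \<subseteq> S"
    and "f ` X \<subseteq> Y"
  shows "f ` SC m J X \<subseteq> SC n J' Y"
proof (clarsimp simp: SC_def)
  fix x S' assume x: "\<forall>S\<in>splits m J. x \<in> conv (X - S)" and "S' \<in> splits n J'"
  then obtain S where S: "S \<in> splits m J" "X \<inter> f -` S' \<subseteq> S" using pullback by blast
  have "f ` (X - S) \<subseteq> Y - S'" using S(2) assms(3) by blast
  then have "f ` conv (X - S) \<subseteq> conv (Y - S')" by (rule conv_image_subset[OF comb])
  then show "f x \<in> conv (Y - S')" using x S(1) by blast
qed

lemma SC_iter_image_subset:
  assumes comb: "\<And>x y u. f (\<lambda>i. u * x i + (1 - u) * y i) = (\<lambda>i. u * f x i + (1 - u) * f y i)"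
    and pullback: "\<And>S'. S' \<in> splits n J' \<Longrightarrow> \<exists>S\<in>splits m J. Rn m \<inter> f -` S' \<subseteq> S"
    and "X \<subseteq> Rn m" and "f ` X \<subseteq> Y"
  shows "f ` SC_iter k m J X \<subseteq> SC_iter k n J' Y"
proof -
  have "SC_iter k m J X \<subseteq> Rn m \<and> f ` SC_iter k m J X \<subseteq> SC_iter k n J' Y"
  proof (induction k)
    case 0
    then show ?case using assms(3,4) by (simp add: SC_iter_def)
  next
    case (Suc k)
    then have in_Rn: "SC_iter k m J X \<subseteq> Rn m"
      and image: "f ` SC_iter k m J X \<subseteq> SC_iter k n J' Y" by simp_all
    have "\<exists>S\<in>splits m J. SC_iter k m J X \<inter> f -` S' \<subseteq> S" if "S' \<in> splits n J'" for S'
      using pullback[OF that] in_Rn by blast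
    then have "f ` SC m J (SC_iter k m J X) \<subseteq> SC n J' (SC_iter k n J' Y)"
      using SC_image_subset[OF comb _ image] by blast
    then show ?case using SC_subset_Rn[OF in_Rn] by (simp add: SC_iter_def)
  qed
  then show ?thesis by blast
qed

lemma lift_map_convex_comb:
  "lift_map l l' n V v (\<lambda>i. u * x i + (1 - u) * y i)
   = (\<lambda>i. u * lift_map l l' n V v x i + (1 - u) * lift_map l l' n V v y i)"
proof
  fix i
  show "lift_map l l' n V v (\<lambda>i. u * x i + (1 - u) * y i) i
      = u * lift_map l l' n V v x i + (1 - u) * lift_map l l' n V v y i"
  proof (cases "i < l'")
    case True
    have "(\<Sum>j<l. real_of_int (V i j) * (u * x j + (1 - u) * y j))
      = u * (\<Sum>j<l. real_of_int (V i j) * x j) + (1 - u) * (\<Sum>j<l. real_of_int (V i j) * y j)"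
      unfolding sum_distrib_left sum.distrib[symmetric] by (rule sum.cong) (auto simp: algebra_simps)
    then show ?thesis using True by (simp add: lift_map_def algebra_simps)
  qed (auto simp: lift_map_def algebra_simps)
qed

lemma sum_mult_lift_map:
  assumes "\<forall>j. j \<notin> {0..<l'} \<longrightarrow> p j = 0" "l' \<le> n" "l \<le> m"
  shows "(\<Sum>i<n. real_of_int (p i) * lift_map l l' n V v x i)
    = (\<Sum>j<m. real_of_int (if j < l then (\<Sum>i<l'. p i * V i j) else 0) * x j)
      + real_of_int (\<Sum>i<l'. p i * v i)"
proof -
  have "(\<Sum>i<n. real_of_int (p i) * lift_map l l' n V v x i)
     = (\<Sum>i<l'. real_of_int (p i) * lift_map l l' n V v x i)"
    by (rule sum.mono_neutral_right) (use assms(1,2) in auto)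
  also have "\<dots> = (\<Sum>i<l'. (\<Sum>j<l. real_of_int (p i) * real_of_int (V i j) * x j)
       + real_of_int (p i) * real_of_int (v i))"
    by (auto simp: lift_map_def sum_distrib_left algebra_simps intro!: sum.cong)
  also have "\<dots> = (\<Sum>j<l. (\<Sum>i<l'. real_of_int (p i) * real_of_int (V i j)) * x j)
       + (\<Sum>i<l'. real_of_int (p i) * real_of_int (v i))"
    by (simp add: sum.distrib sum_distrib_right sum.swap[of _ "{..<l'}"])
  also have "(\<Sum>j<l. (\<Sum>i<l'. real_of_int (p i) * real_of_int (V i j)) * x j)
     = (\<Sum>j<m. real_of_int (if j < l then (\<Sum>i<l'. p i * V i j) else 0) * x j)"
    by (rule sym, rule sum.mono_neutral_cong_right) (use assms(3) in auto)
  finally show ?thesis by simp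
qed

lemma lift_map_vimage_split_set:
  assumes "S' \<in> splits n {0..<l'}" "l' \<le> n" "l \<le> m"
  shows "\<exists>S\<in>splits m {0..<l}. Rn m \<inter> lift_map l l' n V v -` S' \<subseteq> S"
proof -
  obtain p p0 where S': "S' = split_set n p p0" and p: "\<forall>j. j \<notin> {0..<l'} \<longrightarrow> p j = 0"
    using assms(1) by (auto simp: splits_def)
  define q where "q = (\<lambda>j. if j < l then (\<Sum>i<l'. p i * V i j) else 0)"
  define c where "c = (\<Sum>i<l'. p i * v i)"
  have "split_set m q (p0 - c) \<in> splits m {0..<l}" by (auto simp: splits_def q_def)
  moreover have "Rn m \<inter> lift_map l l' n V v -` S' \<subseteq> split_set m q (p0 - c)"
  proof
    fix x assume x: "x \<in> Rn m \<inter> lift_map l l' n V v -` S'"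
    have "(\<Sum>i<n. real_of_int (p i) * lift_map l l' n V v x i)
        = (\<Sum>j<m. real_of_int (q j) * x j) + real_of_int c"
      unfolding q_def c_def by (rule sum_mult_lift_map[OF p assms(2,3)])
    then show "x \<in> split_set m q (p0 - c)" using x by (simp add: S' split_set_def)
  qed
  ultimately show ?thesis by blast
qed

theorem theorem2:
  fixes m n l l' :: nat
    and P Q :: "(nat \<Rightarrow> real) set"
    and V :: "nat \<Rightarrow> nat \<Rightarrow> int" and v :: "nat \<Rightarrow> int"
    and k :: nat
  assumes "P \<subseteq> Rn m" and "Q \<subseteq> Rn n"
    and "0 < l" and "l \<le> m" and "0 < l'" and "l' \<le> n"
    and "m - l = n - l'"
    and "lift_map l l' n V v ` P \<subseteq> Q"
    and "1 \<le> k"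
  shows "lift_map l l' n V v ` SC_iter k m {0..<l} P \<subseteq> SC_iter k n {0..<l'} Q"
  using lift_map_convex_comb lift_map_vimage_split_set[OF _ assms(6,4)] assms(1,8)
  by (rule SC_iter_image_subset)

end
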